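(* Let $\Gamma=(V,E)$ be a graph of order $n$, minimum degree $\delta$ and maximum degree $\Delta$. (a) If $S$ is an $r$-dependent set in $\Gamma$ with $r\in\{0,\dots,\lfloor\frac{\delta-1}{2}\rfloor\}$, then $\overline{S}$ is a global offensive $(\delta-2r)$-alliance in $\Gamma$. (b) If $S$ is a global offensive $k$-alliance in $\Gamma$ with $k\in\{2-\Delta,\dots,\Delta\}$, then $\overline{S}$ is a $\left\lfloor\frac{\Delta-k}{2}\right\rfloor$-dependent set in $\Gamma$. (c) If $\Gamma$ is $\delta$-regular with $\delta>0$, then for $r\in\{0,\dots,\lfloor\frac{\delta-1}{2}\rfloor\}$, $S$ is an $r$-dependent set in $\Gamma$ if and only if $\overline{S}$ is a global offensive $(\delta-2r)$-alliance in $\Gamma$.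
   Context: Graphs are finite and simple. For $S\subseteq V$ and $v\in V$, $\delta_S(v)$ is the number of neighbours of $v$ in $S$, $\overline{S}=V\setminus S$, and $\partial(S)$ is the set of vertices of $\overline{S}$ with at least one neighbour in $S$. For an integer $k$, a nonempty set $S\subseteq V$ is an offensive $k$-alliance if $\delta_S(v)\ge\delta_{\overline{S}}(v)+k$ for every $v\in\partial(S)$; it is a global offensive $k$-alliance if moreover it is dominating (every vertex of $\overline{S}$ has a neighbour in $S$). A set $S\subseteq V$ is $r$-dependent if $\delta_S(v)\le r$ for every $v\in S$ (the induced subgraph on $S$ has maximum degree at most $r$). *)

theory Defs
  imports Main
begin

definition graph :: "'a set \<Rightarrow> ('a \<Rightarrow> 'a \<Rightarrow> bool) \<Rightarrow> bool" where
  "graph V E \<longleftrightarrow> finite V \<and> (\<forall>u v. E u v \<longrightarrow> u \<in> V \<and> v \<in> V)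
     \<and> (\<forall>u v. E u v \<longrightarrow> E v u) \<and> (\<forall>v. \<not> E v v)"

definition nbrs_in :: "('a \<Rightarrow> 'a \<Rightarrow> bool) \<Rightarrow> 'a set \<Rightarrow> 'a \<Rightarrow> nat" where
  "nbrs_in E S v = card {u \<in> S. E v u}"

definition degree :: "'a set \<Rightarrow> ('a \<Rightarrow> 'a \<Rightarrow> bool) \<Rightarrow> 'a \<Rightarrow> nat" where
  "degree V E v = nbrs_in E V v"

definition min_degree :: "'a set \<Rightarrow> ('a \<Rightarrow> 'a \<Rightarrow> bool) \<Rightarrow> nat" where
  "min_degree V E = Min (degree V E ` V)"

definition max_degree :: "'a set \<Rightarrow> ('a \<Rightarrow> 'a \<Rightarrow> bool) \<Rightarrow> nat" where
  "max_degree V E = Max (degree V E ` V)"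

definition boundary :: "'a set \<Rightarrow> ('a \<Rightarrow> 'a \<Rightarrow> bool) \<Rightarrow> 'a set \<Rightarrow> 'a set" where
  "boundary V E S = {v \<in> V - S. \<exists>u \<in> S. E v u}"

definition offensive_alliance :: "'a set \<Rightarrow> ('a \<Rightarrow> 'a \<Rightarrow> bool) \<Rightarrow> int \<Rightarrow> 'a set \<Rightarrow> bool" where
  "offensive_alliance V E k S \<longleftrightarrow> S \<noteq> {} \<and> S \<subseteq> V \<and>
     (\<forall>v \<in> boundary V E S. int (nbrs_in E S v) \<ge> int (nbrs_in E (V - S) v) + k)"

definition dominating :: "'a set \<Rightarrow> ('a \<Rightarrow> 'a \<Rightarrow> bool) \<Rightarrow> 'a set \<Rightarrow> bool" where
  "dominating V E S \<longleftrightarrow> S \<subseteq> V \<and> (\<forall>v \<in> V - S. \<exists>u \<in> S. E v u)"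

definition global_offensive_alliance :: "'a set \<Rightarrow> ('a \<Rightarrow> 'a \<Rightarrow> bool) \<Rightarrow> int \<Rightarrow> 'a set \<Rightarrow> bool" where
  "global_offensive_alliance V E k S \<longleftrightarrow> offensive_alliance V E k S \<and> dominating V E S"

definition r_dependent :: "'a set \<Rightarrow> ('a \<Rightarrow> 'a \<Rightarrow> bool) \<Rightarrow> int \<Rightarrow> 'a set \<Rightarrow> bool" where
  "r_dependent V E r S \<longleftrightarrow> S \<subseteq> V \<and> (\<forall>v \<in> S. int (nbrs_in E S v) \<le> r)"

end

theory Submission
  imports Defs
begin

text \<open>Each vertex splits its degree between S and V - S, so a bound on neighbours
  inside S is the same as a bound on neighbours outside S. This exchange turns
  r-dependence of S into the alliance inequality for V - S (with r < \<delta> leaving every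
  vertex of S a neighbour outside, which gives domination) and back; comparing against
  \<delta> or \<Delta> costs slack, which vanishes for regular graphs and yields the equivalence.\<close>

lemma nbrs_in_partition:
  assumes "graph V E" and "v \<in> V" and "S \<subseteq> V"
  shows "nbrs_in E S v + nbrs_in E (V - S) v = degree V E v"
proof -
  have "finite V" using assms(1) by (simp add: graph_def)
  then have "card ({u \<in> S. E v u} \<union> {u \<in> V - S. E v u})
      = card {u \<in> S. E v u} + card {u \<in> V - S. E v u}"
    using assms(3) by (intro card_Un_disjoint) (auto intro: finite_subset)
  moreover have "{u \<in> S. E v u} \<union> {u \<in> V - S. E v u} = {u \<in> V. E v u}"
    using assms(3) by auto
  ultimately show ?thesis by (simp add: nbrs_in_def degree_def)
qed

lemma min_degree_le_degree:
  "graph V E \<Longrightarrow> v \<in> V \<Longrightarrow> min_degree V E \<le> degree V E v"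
  by (simp add: min_degree_def graph_def)

lemma degree_le_max_degree:
  "graph V E \<Longrightarrow> v \<in> V \<Longrightarrow> degree V E v \<le> max_degree V E"
  by (simp add: max_degree_def graph_def)

lemma nbrs_in_pos_iff:
  "finite S \<Longrightarrow> 0 < nbrs_in E S v \<longleftrightarrow> (\<exists>u \<in> S. E v u)"
  by (auto simp: nbrs_in_def card_gt_0_iff)

lemma boundary_complement:
  "S \<subseteq> V \<Longrightarrow> boundary V E (V - S) = {v \<in> S. \<exists>u \<in> V - S. E v u}"
  by (auto simp: boundary_def)

lemma r_dependent_complement_global_offensive_alliance:
  assumes g: "graph V E" and "V \<noteq> {}" and dep: "r_dependent V E r S"
    and r: "r < int (min_degree V E)"
  shows "global_offensive_alliance V E (int (min_degree V E) - 2 * r) (V - S)"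
proof -
  have S: "S \<subseteq> V" and inside: "\<forall>v \<in> S. int (nbrs_in E S v) \<le> r"
    using dep by (auto simp: r_dependent_def)
  have outside: "int (min_degree V E) - r \<le> int (nbrs_in E (V - S) v)" if v: "v \<in> S" for v
  proof -
    have "nbrs_in E S v + nbrs_in E (V - S) v = degree V E v"
      using nbrs_in_partition[OF g _ S] v S by blast
    moreover have "min_degree V E \<le> degree V E v" using min_degree_le_degree[OF g] v S by blast
    ultimately show ?thesis using inside v by fastforce
  qed
  have dom: "\<exists>u \<in> V - S. E v u" if "v \<in> S" for v
  proof -
    have "0 < nbrs_in E (V - S) v" using outside[OF that] r by linarith
    then show ?thesis using g by (subst (asm) nbrs_in_pos_iff) (auto simp: graph_def)
  qed
  have "V - S \<noteq> {}"
    using \<open>V \<noteq> {}\<close> dom by blast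
  moreover have "V - (V - S) = S" using S by auto
  moreover have "int (nbrs_in E S v) + (int (min_degree V E) - 2 * r) \<le> int (nbrs_in E (V - S) v)"
    if "v \<in> S" for v
    using inside outside that by fastforce
  ultimately show ?thesis
    using S dom boundary_complement[OF S]
    by (auto simp: global_offensive_alliance_def offensive_alliance_def dominating_def)
qed

lemma global_offensive_alliance_complement_r_dependent:
  assumes g: "graph V E" and a: "global_offensive_alliance V E k S"
  shows "r_dependent V E ((int (max_degree V E) - k) div 2) (V - S)"
proof -
  have S: "S \<subseteq> V" and dom: "\<forall>v \<in> V - S. \<exists>u \<in> S. E v u"
    and off: "\<forall>v \<in> boundary V E S. int (nbrs_in E (V - S) v) + k \<le> int (nbrs_in E S v)"
    using a by (auto simp: global_offensive_alliance_def offensive_alliance_def dominating_def)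
  have "int (nbrs_in E (V - S) v) \<le> (int (max_degree V E) - k) div 2" if v: "v \<in> V - S" for v
  proof -
    have "v \<in> boundary V E S" using dom v by (auto simp: boundary_def)
    then have "int (nbrs_in E (V - S) v) + k \<le> int (nbrs_in E S v)" using off by blast
    moreover have "nbrs_in E S v + nbrs_in E (V - S) v = degree V E v"
      using nbrs_in_partition[OF g _ S] v by blast
    moreover have "degree V E v \<le> max_degree V E" using degree_le_max_degree[OF g] v by blast
    ultimately have "2 * int (nbrs_in E (V - S) v) \<le> int (max_degree V E) - k" by linarith
    then show ?thesis by linarith
  qed
  then show ?thesis by (auto simp: r_dependent_def)
qed

lemma regular_global_offensive_complement_r_dependent:
  assumes g: "graph V E" and regular: "\<forall>v \<in> V. degree V E v = min_degree V E"
    and S: "S \<subseteq> V"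
    and a: "global_offensive_alliance V E (int (min_degree V E) - 2 * r) (V - S)"
  shows "r_dependent V E r S"
proof -
  have "V - (V - S) = S" using S by auto
  then have dom: "\<forall>v \<in> S. \<exists>u \<in> V - S. E v u"
    and off: "\<forall>v \<in> boundary V E (V - S).
      int (nbrs_in E S v) + (int (min_degree V E) - 2 * r) \<le> int (nbrs_in E (V - S) v)"
    using a by (auto simp: global_offensive_alliance_def offensive_alliance_def dominating_def)
  have "int (nbrs_in E S v) \<le> r" if v: "v \<in> S" for v
  proof -
    have "v \<in> boundary V E (V - S)" using dom v boundary_complement[OF S] by blast
    then have "int (nbrs_in E S v) + (int (min_degree V E) - 2 * r) \<le> int (nbrs_in E (V - S) v)"
      using off by blast
    moreover have "nbrs_in E S v + nbrs_in E (V - S) v = degree V E v"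
      using nbrs_in_partition[OF g _ S] v S by blast
    moreover have "degree V E v = min_degree V E" using regular v S by blast
    ultimately show ?thesis by linarith
  qed
  then show ?thesis using S by (auto simp: r_dependent_def)
qed

theorem mainTheorem2:
  fixes V :: "'a set" and E :: "'a \<Rightarrow> 'a \<Rightarrow> bool"
  assumes "graph V E" and "V \<noteq> {}"
  shows
   "(\<forall>S r. r_dependent V E r S \<and> 0 \<le> r \<and> r \<le> (int (min_degree V E) - 1) div 2 \<longrightarrow>
        global_offensive_alliance V E (int (min_degree V E) - 2 * r) (V - S))
    \<and> (\<forall>S k. global_offensive_alliance V E k S \<and> 2 - int (max_degree V E) \<le> k \<and> k \<le> int (max_degree V E) \<longrightarrow>
        r_dependent V E ((int (max_degree V E) - k) div 2) (V - S))
    \<and> ((\<forall>v \<in> V. degree V E v = min_degree V E) \<and> min_degree V E > 0 \<longrightarrow>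
        (\<forall>S r. S \<subseteq> V \<and> 0 \<le> r \<and> r \<le> (int (min_degree V E) - 1) div 2 \<longrightarrow>
           (r_dependent V E r S \<longleftrightarrow> global_offensive_alliance V E (int (min_degree V E) - 2 * r) (V - S))))"
proof -
  have below_min: "r < int (min_degree V E)"
    if "0 \<le> r" "r \<le> (int (min_degree V E) - 1) div 2" for r
    using that by linarith
  show ?thesis
    using r_dependent_complement_global_offensive_alliance[OF assms _ below_min]
      global_offensive_alliance_complement_r_dependent[OF assms(1)]
      regular_global_offensive_complement_r_dependent[OF assms(1)]
    by blast
qed

end
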